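(* Fix $M>0$ and consider the following repeated game (Protocol 2) between nature, a forecaster and agents, for $t=1,2,\dots$: (1) nature reveals $x_t\in\mathcal{X}$ and chooses $\mu_t^*\in[0,1]$ without revealing it; (2) the forecaster reveals $\mu_t,c_t$; (3) agent $t$, with loss function $l_t:\mathcal{A}\times\{0,1\}\to\mathbb{R}$, reveals an action $a_t\in\mathcal{A}$ and a stake $b_t\in[-M,M]$; (4) nature samples $y_t\sim\mathrm{Bernoulli}(\mu_t^* )$ and reveals $y_t$; (5) the agent incurs loss $l_t(a_t,y_t)-b_t(y_t-\mu_t)+|b_t|c_t$ and the forecaster incurs loss $b_t(y_t-\mu_t)-|b_t|c_t$. Each player's choice at time $t$ may depend arbitrarily on everything revealed before it, but not on future quantities. Suppose additionally that $b_t\ge 0$ for all $t$. Then there exists an algorithm for the forecaster that outputs $\mu_t$ with $c_t\equiv 0$ and is asymptotically exact for $\mu_t^*,b_t$ generated by any strategy of nature and agents, i.e. $$\limsup_{T\to\infty}\frac1T\sum_{t=1}^T b_t(\mu_t-y_t)=0.$$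
   Context: A sequence of forecasts $(\mu_t,c_t)$ is called asymptotically exact relative to $y_1,b_1,y_2,b_2,\dots$ if $\limsup_{T\to\infty}\frac1T\sum_{t=1}^T b_t(\mu_t-y_t)-|b_t|c_t=0$. *)

theory Defs
  imports "HOL-Analysis.Analysis"
begin

text \<open>Asymptotic exactness of forecasts (mu_t, c_t) relative to y_1,b_1,y_2,b_2,...
  Rounds are indexed from 0, so the sum over t < T is the sum over rounds 1..T.\<close>
definition asymptotically_exact ::
  "(nat \<Rightarrow> real) \<Rightarrow> (nat \<Rightarrow> real) \<Rightarrow> (nat \<Rightarrow> real) \<Rightarrow> (nat \<Rightarrow> real) \<Rightarrow> bool" where
  "asymptotically_exact mu c y b \<longleftrightarrow>
     limsup (\<lambda>T. ereal ((1 / real T) * (\<Sum>t<T. b t * (mu t - y t) - \<bar>b t\<bar> * c t))) = 0"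

text \<open>Public history available to the forecaster before its move in round t:
  the tuples (x_s, a_s, b_s, y_s) of all past rounds s < t (its own past forecasts are
  recomputable from these), together with the current x_t.\<close>
definition history ::
  "(nat \<Rightarrow> 'x) \<Rightarrow> (nat \<Rightarrow> 'a) \<Rightarrow> (nat \<Rightarrow> real) \<Rightarrow> (nat \<Rightarrow> real) \<Rightarrow> nat \<Rightarrow> ('x \<times> 'a \<times> real \<times> real) list" where
  "history x a b y t = map (\<lambda>s. (x s, a s, b s, y s)) [0..<t]"

end

theory Submission
  imports Defs
begin

text \<open>The forecaster keeps the running balance S = \<Sum>s<t. b s * (\<mu> s - y s) of past
  rounds and forecasts \<mu> t = 0 while S > 0 and \<mu> t = 1 otherwise. Since b \<ge> 0, the
  next increment -b y resp. b (1 - y) then never has the sign of S and has modulus at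
  most M, so S stays in [-M, M]. Bounded partial sums have vanishing averages, which is asymptotic exactness
  with c = 0.\<close>

lemma abs_sum_le_if_increments_oppose:
  fixes d :: "nat \<Rightarrow> real"
  assumes "0 \<le> M" and "\<And>t. \<bar>d t\<bar> \<le> M"
    and "\<And>t. (\<Sum>s<t. d s) > 0 \<Longrightarrow> d t \<le> 0"
    and "\<And>t. (\<Sum>s<t. d s) \<le> 0 \<Longrightarrow> d t \<ge> 0"
  shows "\<bar>\<Sum>s<t. d s\<bar> \<le> M"
proof (induction t)
  case 0
  show ?case using assms(1) by simp
next
  case (Suc t)
  show ?case
    using Suc.IH assms(2-4)[of t] by (cases "(\<Sum>s<t. d s) > 0") (simp_all add: abs_le_iff)
qed

lemma average_tendsto_0_if_bounded_sums:
  fixes f :: "nat \<Rightarrow> real"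
  assumes "\<And>T. \<bar>\<Sum>t<T. f t\<bar> \<le> C"
  shows "(\<lambda>T. (1 / real T) * (\<Sum>t<T. f t)) \<longlonglongrightarrow> 0"
proof (rule Lim_null_comparison)
  show "\<forall>\<^sub>F T in sequentially. norm ((1 / real T) * (\<Sum>t<T. f t)) \<le> C * (1 / real T)"
    using assms by (intro always_eventually allI) (simp add: abs_mult divide_right_mono)
  show "(\<lambda>T. C * (1 / real T)) \<longlonglongrightarrow> 0"
    using tendsto_mult_right_zero[OF lim_const_over_n[of 1]] by simp
qed

lemma asymptotically_exact_if_bounded_sums:
  assumes "\<And>T. \<bar>\<Sum>t<T. b t * (mu t - y t) - \<bar>b t\<bar> * c t\<bar> \<le> C"
  shows "asymptotically_exact mu c y b"
proof -
  have "(\<lambda>T. ereal ((1 / real T) * (\<Sum>t<T. b t * (mu t - y t) - \<bar>b t\<bar> * c t)))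
          \<longlonglongrightarrow> ereal 0"
    using average_tendsto_0_if_bounded_sums[OF assms] by (rule tendsto_ereal)
  then show ?thesis
    unfolding asymptotically_exact_def zero_ereal_def[symmetric]
    by (rule lim_imp_Limsup[OF sequentially_bot])
qed

definition forecast_of_balance :: "real \<Rightarrow> real" where
  "forecast_of_balance S = (if S > 0 then 0 else 1)"

definition balance_step :: "real \<Rightarrow> 'x \<times> 'a \<times> real \<times> real \<Rightarrow> real" where
  "balance_step S e = (case e of (_, _, b, y) \<Rightarrow> S + b * (forecast_of_balance S - y))"

definition balance :: "('x \<times> 'a \<times> real \<times> real) list \<Rightarrow> real" where
  "balance h = foldl balance_step 0 h"

definition balancing_forecaster :: "('x \<times> 'a \<times> real \<times> real) list \<Rightarrow> 'x \<Rightarrow> real" where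
  "balancing_forecaster h xt = forecast_of_balance (balance h)"

lemma history_0: "history x a b y 0 = []"
  by (simp add: history_def)

lemma history_Suc: "history x a b y (Suc t) = history x a b y t @ [(x t, a t, b t, y t)]"
  by (simp add: history_def)

lemma balance_history:
  "balance (history x a b y t) =
     (\<Sum>s<t. b s * (balancing_forecaster (history x a b y s) (x s) - y s))"
  by (induction t) (simp_all add: balance_def history_0 history_Suc balance_step_def
      balancing_forecaster_def)

lemma abs_balance_history_le:
  assumes "\<forall>t. y t \<in> {0, 1}" and "\<forall>t. 0 \<le> b t \<and> b t \<le> M"
  shows "\<bar>balance (history x a b y t)\<bar> \<le> M"
proof -
  define d where "d s = b s * (balancing_forecaster (history x a b y s) (x s) - y s)" for s
  have balance_eq: "balance (history x a b y s) = (\<Sum>r<s. d r)" for s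
    unfolding d_def by (rule balance_history)
  have d_eq: "d s = b s * (forecast_of_balance (\<Sum>r<s. d r) - y s)" for s
    unfolding d_def[of s] balancing_forecaster_def balance_eq by (rule refl)
  have y01: "y s = 0 \<or> y s = 1" and b_bounds: "0 \<le> b s" "b s \<le> M" for s
    using assms by auto
  have "\<bar>\<Sum>s<t. d s\<bar> \<le> M"
  proof (rule abs_sum_le_if_increments_oppose)
    show "0 \<le> M" using b_bounds by (rule order_trans)
    show "\<bar>d s\<bar> \<le> M" for s
      using y01[of s] b_bounds[of s] d_eq[of s] by (auto simp: forecast_of_balance_def)
    show "d s \<le> 0" if "(\<Sum>r<s. d r) > 0" for s
      using that y01[of s] b_bounds[of s] d_eq[of s] by (auto simp: forecast_of_balance_def)
    show "d s \<ge> 0" if "(\<Sum>r<s. d r) \<le> 0" for s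
      using that y01[of s] b_bounds[of s] d_eq[of s] by (auto simp: forecast_of_balance_def)
  qed
  then show ?thesis by (simp only: balance_eq)
qed

theorem corollary1:
  fixes M :: real
  assumes "M > 0"
  shows "\<exists>F :: ('x \<times> 'a \<times> real \<times> real) list \<Rightarrow> 'x \<Rightarrow> real.
           (\<forall>h xt. 0 \<le> F h xt \<and> F h xt \<le> 1) \<and>
           (\<forall>(x :: nat \<Rightarrow> 'x) (a :: nat \<Rightarrow> 'a) (b :: nat \<Rightarrow> real) (y :: nat \<Rightarrow> real).
              (\<forall>t. y t \<in> {0, 1}) \<longrightarrow> (\<forall>t. 0 \<le> b t \<and> b t \<le> M) \<longrightarrow>
              asymptotically_exact (\<lambda>t. F (history x a b y t) (x t)) (\<lambda>_. 0) y b)"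
proof (intro exI[of _ balancing_forecaster] conjI allI impI)
  fix h :: "('x \<times> 'a \<times> real \<times> real) list" and xt :: 'x
  show "0 \<le> balancing_forecaster h xt" "balancing_forecaster h xt \<le> 1"
    by (auto simp: balancing_forecaster_def forecast_of_balance_def)
next
  fix x :: "nat \<Rightarrow> 'x" and a :: "nat \<Rightarrow> 'a" and b y :: "nat \<Rightarrow> real"
  assume y: "\<forall>t. y t \<in> {0, 1}" and b: "\<forall>t. 0 \<le> b t \<and> b t \<le> M"
  have bounded: "\<bar>\<Sum>t<T. b t * (balancing_forecaster (history x a b y t) (x t) - y t)\<bar> \<le> M" for T
    using abs_balance_history_le[OF y b, of x a T] unfolding balance_history .
  show "asymptotically_exact (\<lambda>t. balancing_forecaster (history x a b y t) (x t))
      (\<lambda>_. 0) y b"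
    by (rule asymptotically_exact_if_bounded_sums) (unfold mult_zero_right diff_zero, rule bounded)
qed

end
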